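(* Let $(T,\sigma)$ be a gene tree and $S$ a species tree, and let $a,b,c,d\in L(T)$ be genes such that $\sigma(a),\sigma(b),\sigma(c),\sigma(d)$ are pairwise distinct. Set $u:=\operatorname{lca}_S(\sigma(a),\sigma(b),\sigma(c),\sigma(d))$, $v_1:=\operatorname{lca}_S(\sigma(a),\sigma(b))$ and $v_2:=\operatorname{lca}_S(\sigma(c),\sigma(d))$. If $v_1\prec_S u$, $v_2\prec_S u$, and $\overline{T}[a,b,c,d]=(ac|bd)$ or $\overline{T}[a,b,c,d]=(ad|bc)$, then $u\prec_S\mu(\operatorname{lca}_T(a,b,c,d))$ for every reconciliation map $\mu:V(T)\to V(S)\cup E(S)$ without horizontal gene transfer (satisfying (R0)–(R4)). In particular, $\operatorname{lca}_T(a,b,c,d)$ is a duplication event, i.e., $\mu(\operatorname{lca}_T(a,b,c,d))\in E(S)$.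
   Context: A planted phylogenetic tree $T$ has a distinguished leaf $0_T$ (planted root) whose unique neighbour $\rho_T$ is the root; every other inner vertex has at least two children; $L(T)$ are the leaves other than $0_T$. $p\preceq_T q$ means $q$ lies on the path from $p$ to $0_T$; $\operatorname{lca}_T(A)$ is the $\preceq_T$-minimal vertex above all of $A$. A species tree $S$ is a planted phylogenetic tree with planted root $0_S$, root $\rho_S$, leaf set $\mathscr{S}$; $V^0(S)$ are its inner vertices (neither leaves nor $0_S$). The order $\preceq_S$ extends to $V(S)\cup E(S)$ by placing each edge $e=pq$ ($q$ child of $p$) strictly between $q$ and $p$ ($w\prec_S e$ iff $w\preceq_S q$; $e\prec_S w$ iff $p\preceq_S w$; for edges $e=pq$, $e'=p'q'$, $e\prec_S e'$ iff $p\preceq_S q'$); $\operatorname{lca}_S$ is the $\preceq_S$-minimal vertex above the given elements. A gene tree $(T,\sigma)$ is a planted phylogenetic tree with $\sigma:L(T)\to\mathscr{S}$. A reconciliation map without horizontal gene transfer is $\mu:V(T)\to V(S)\cup E(S)$ with: (R0) $\mu(v)=0_S$ iff $v=0_T$; (R1) $\mu(v)=\sigma(v)$ for $v\in L(T)$; (R2) $v\prec_T w\Rightarrow\mu(v)\preceq_S\mu(w)$; for each $v$ with $\mu(v)\in V^0(S)$: (R3.i) $\mu(v)=\operatorname{lca}_S(\mu(v'),\mu(v''))$ for at least two distinct children $v',v''$ of $v$, (R3.ii) $\mu(v'),\mu(v'')$ are $\preceq_S$-incomparable for any two distinct children of $v$; and (R4) for leaves $x,y,z$, if $\mu(\operatorname{lca}_T(x,y))=\mu(\operatorname{lca}_T(x,z))\in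 V^0(S)$ then $\operatorname{lca}_S(\sigma(x),\sigma(y))=\operatorname{lca}_S(\sigma(x),\sigma(z))$. A vertex $v$ is a duplication if $\mu(v)\in E(S)$. The unrooted tree $\overline{T}$ is obtained by deleting $0_T$ and its edge and suppressing $\rho_T$ if it has two children; for four leaves $p,q,r,s$, $\overline{T}[p,q,r,s]$ is the subtree spanned by them with degree-2 vertices suppressed, and $\overline{T}[p,q,r,s]=(pq|rs)$ if some edge of it separates $\{p,q\}$ from $\{r,s\}$. *)

theory Defs
  imports Main
begin

text \<open>Rooted trees are given by a finite vertex set V, a parent map par and the
planted root r0 (with par r0 = r0).\<close>

definition anc :: "('v \<Rightarrow> 'v) \<Rightarrow> 'v \<Rightarrow> 'v \<Rightarrow> bool" where
  "anc par x y \<longleftrightarrow> (\<exists>k. (par ^^ k) x = y)"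

definition children :: "'v set \<Rightarrow> ('v \<Rightarrow> 'v) \<Rightarrow> 'v \<Rightarrow> 'v \<Rightarrow> 'v set" where
  "children V par r0 v = {w \<in> V. w \<noteq> r0 \<and> par w = v}"

definition leaves :: "'v set \<Rightarrow> ('v \<Rightarrow> 'v) \<Rightarrow> 'v \<Rightarrow> 'v set" where
  "leaves V par r0 = {v \<in> V. v \<noteq> r0 \<and> children V par r0 v = {}}"

definition inner :: "'v set \<Rightarrow> ('v \<Rightarrow> 'v) \<Rightarrow> 'v \<Rightarrow> 'v set" where
  "inner V par r0 = {v \<in> V. v \<noteq> r0 \<and> children V par r0 v \<noteq> {}}"

definition planted_phylo :: "'v set \<Rightarrow> ('v \<Rightarrow> 'v) \<Rightarrow> 'v \<Rightarrow> bool" where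
  "planted_phylo V par r0 \<longleftrightarrow>
     finite V \<and> r0 \<in> V \<and> par r0 = r0 \<and>
     (\<forall>v\<in>V. par v \<in> V \<and> anc par v r0) \<and>
     card (children V par r0 r0) = 1 \<and>
     (\<forall>v\<in>inner V par r0. card (children V par r0 v) \<ge> 2)"

definition lcaT :: "'v set \<Rightarrow> ('v \<Rightarrow> 'v) \<Rightarrow> 'v set \<Rightarrow> 'v" where
  "lcaT V par A = (THE x. x \<in> V \<and> (\<forall>a\<in>A. anc par a x) \<and>
      (\<forall>y\<in>V. (\<forall>a\<in>A. anc par a y) \<longrightarrow> anc par x y))"

text \<open>Elements of V(S) \<union> E(S): a vertex, or an edge (p,q) with q a child of p.\<close>
datatype 'w place = Vx 'w | Ed 'w 'w

definition edges :: "'w set \<Rightarrow> ('w \<Rightarrow> 'w) \<Rightarrow> 'w \<Rightarrow> 'w place set" where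
  "edges V par r0 = {Ed (par q) q | q. q \<in> V \<and> q \<noteq> r0}"

text \<open>The strict order \<prec>_S extended to V(S) \<union> E(S), edges e = pq placed strictly
between q and p.\<close>
fun plt :: "('w \<Rightarrow> 'w) \<Rightarrow> 'w place \<Rightarrow> 'w place \<Rightarrow> bool" where
  "plt par (Vx w) (Vx w') = (anc par w w' \<and> w \<noteq> w')"
| "plt par (Vx w) (Ed p q) = anc par w q"
| "plt par (Ed p q) (Vx w) = anc par p w"
| "plt par (Ed p q) (Ed p' q') = anc par p q'"

definition ple :: "('w \<Rightarrow> 'w) \<Rightarrow> 'w place \<Rightarrow> 'w place \<Rightarrow> bool" where
  "ple par x y \<longleftrightarrow> x = y \<or> plt par x y"

definition lcaS :: "'w set \<Rightarrow> ('w \<Rightarrow> 'w) \<Rightarrow> 'w place set \<Rightarrow> 'w" where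
  "lcaS V par A = (THE w. w \<in> V \<and> (\<forall>x\<in>A. ple par x (Vx w)) \<and>
      (\<forall>w'\<in>V. (\<forall>x\<in>A. ple par x (Vx w')) \<longrightarrow> anc par w w'))"

definition reconciliation ::
  "'v set \<Rightarrow> ('v \<Rightarrow> 'v) \<Rightarrow> 'v \<Rightarrow> ('v \<Rightarrow> 'w) \<Rightarrow>
   'w set \<Rightarrow> ('w \<Rightarrow> 'w) \<Rightarrow> 'w \<Rightarrow> ('v \<Rightarrow> 'w place) \<Rightarrow> bool" where
  "reconciliation VT parT r0T \<sigma> VS parS r0S \<mu> \<longleftrightarrow>
     (\<forall>v\<in>VT. \<mu> v \<in> Vx ` VS \<union> edges VS parS r0S) \<and>
     (\<forall>v\<in>VT. \<mu> v = Vx r0S \<longleftrightarrow> v = r0T) \<and>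
     (\<forall>v\<in>leaves VT parT r0T. \<mu> v = Vx (\<sigma> v)) \<and>
     (\<forall>v\<in>VT. \<forall>w\<in>VT. anc parT v w \<and> v \<noteq> w \<longrightarrow> ple parS (\<mu> v) (\<mu> w)) \<and>
     (\<forall>v\<in>VT. \<mu> v \<in> Vx ` inner VS parS r0S \<longrightarrow>
        (\<exists>v'\<in>children VT parT r0T v. \<exists>v''\<in>children VT parT r0T v. v' \<noteq> v'' \<and>
            \<mu> v = Vx (lcaS VS parS {\<mu> v', \<mu> v''})) \<and>
        (\<forall>v'\<in>children VT parT r0T v. \<forall>v''\<in>children VT parT r0T v. v' \<noteq> v'' \<longrightarrow>
            \<not> ple parS (\<mu> v') (\<mu> v'') \<and> \<not> ple parS (\<mu> v'') (\<mu> v'))) \<and>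
     (\<forall>x\<in>leaves VT parT r0T. \<forall>y\<in>leaves VT parT r0T. \<forall>z\<in>leaves VT parT r0T.
        \<mu> (lcaT VT parT {x, y}) = \<mu> (lcaT VT parT {x, z}) \<and>
        \<mu> (lcaT VT parT {x, y}) \<in> Vx ` inner VS parS r0S \<longrightarrow>
        lcaS VS parS {Vx (\<sigma> x), Vx (\<sigma> y)} = lcaS VS parS {Vx (\<sigma> x), Vx (\<sigma> z)})"

text \<open>The spanned subtree on Q is the union of these
paths.  An edge {x, par x} of it (not the edge at the planted root, which is deleted in
the unrooted tree) separates {p,q} from {r,s} iff, after removing it, p,q lie in the
part below x and r,s in the other part (or vice versa).  Suppressing degree-2 vertices
only merges edges and does not change which separations exist.\<close>
definition on_path :: "'v set \<Rightarrow> ('v \<Rightarrow> 'v) \<Rightarrow> 'v \<Rightarrow> 'v \<Rightarrow> 'v \<Rightarrow> bool" where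
  "on_path V par x y w \<longleftrightarrow> anc par w (lcaT V par {x, y}) \<and> (anc par x w \<or> anc par y w)"

definition spanned :: "'v set \<Rightarrow> ('v \<Rightarrow> 'v) \<Rightarrow> 'v set \<Rightarrow> 'v set" where
  "spanned V par Q = {w \<in> V. \<exists>x\<in>Q. \<exists>y\<in>Q. on_path V par x y w}"

definition quartet :: "'v set \<Rightarrow> ('v \<Rightarrow> 'v) \<Rightarrow> 'v \<Rightarrow> 'v \<Rightarrow> 'v \<Rightarrow> 'v \<Rightarrow> 'v \<Rightarrow> bool" where
  "quartet V par r0 p q r s \<longleftrightarrow>
     (\<exists>x\<in>V. x \<noteq> r0 \<and> par x \<noteq> r0 \<and>
        x \<in> spanned V par {p, q, r, s} \<and> par x \<in> spanned V par {p, q, r, s} \<and>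
        ((anc par p x \<and> anc par q x \<and> \<not> anc par r x \<and> \<not> anc par s x) \<or>
         (anc par r x \<and> anc par s x \<and> \<not> anc par p x \<and> \<not> anc par q x)))"

end

theory Submission
  imports Defs
begin

text \<open>Let w be the lca of a, b, c, d in T and u that of their species in S. The quartet
(ac|bd) or (ad|bc) gives a cluster of T containing one gene p of a, b and one gene q of c, d,
but not all four genes. Let w' be the child of w above this cluster and w'' another child of w,
above some gene t not below w'. As v1 and v2 lie strictly below u, the species of p and q
already have lca u, so u lies below \<mu>(w'). Hence \<mu>(w') and \<mu>(w'') both lie above the
species of t, so they are comparable, and (R3.ii) forbids \<mu>(w) to be an inner vertex of S.
But \<mu>(w) lies above u, which has v1 strictly below it, and w is not the planted root (which
has a single child); so \<mu>(w) can only be an edge above u.\<close>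

lemma funpow_fixpoint: "f x = x \<Longrightarrow> (f ^^ n) x = x"
  by (induction n) auto

lemma anc_refl [simp]: "anc par x x"
  unfolding anc_def by (rule exI[of _ 0]) simp

lemma anc_par: "anc par x (par x)"
  unfolding anc_def by (rule exI[of _ 1]) simp

lemma anc_trans: "anc par x y \<Longrightarrow> anc par y z \<Longrightarrow> anc par x z"
  unfolding anc_def by (metis comp_apply funpow_add)

lemma anc_par_if_neq: "anc par x y \<Longrightarrow> x \<noteq> y \<Longrightarrow> anc par (par x) y"
  unfolding anc_def by (metis funpow_0 funpow_simps_right(2) comp_apply not0_implies_Suc)

lemma anc_linear: "anc par x y \<Longrightarrow> anc par x z \<Longrightarrow> anc par y z \<or> anc par z y"
proof -
  assume "anc par x y" "anc par x z"
  then obtain i j where i: "(par ^^ i) x = y" and j: "(par ^^ j) x = z"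
    unfolding anc_def by blast
  have shift: "anc par ((par ^^ m) x) ((par ^^ (k + m)) x)" for k m
    unfolding anc_def funpow_add comp_apply by blast
  show ?thesis
  proof (cases "i \<le> j")
    case True
    then show ?thesis using shift[of i "j - i"] i j by simp
  next
    case False
    then show ?thesis using shift[of j "i - j"] i j by simp
  qed
qed

lemma anc_upper_of_incomparable:
  assumes "anc par s x" "anc par t y" "anc par s z" "anc par t z"
    and "\<not> anc par x y" "\<not> anc par y x"
  shows "anc par x z"
proof -
  have "anc par x z \<or> anc par z x" using anc_linear[OF assms(1,3)] .
  moreover have "\<not> anc par z x"
  proof
    assume "anc par z x"
    then have "anc par t x" using anc_trans[OF assms(4)] by blast
    then show False using anc_linear[OF _ assms(2)] assms(5,6) by blast
  qed
  ultimately show ?thesis by blast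
qed

locale rooted_tree =
  fixes V :: "'v set" and par :: "'v \<Rightarrow> 'v" and r0 :: 'v
  assumes par_root: "par r0 = r0"
    and par_in_V: "v \<in> V \<Longrightarrow> par v \<in> V"
    and anc_root: "v \<in> V \<Longrightarrow> anc par v r0"

lemma planted_phylo_rooted_tree: "planted_phylo V par r0 \<Longrightarrow> rooted_tree V par r0"
  unfolding planted_phylo_def by unfold_locales auto

lemma planted_phylo_not_root_if_two_children:
  assumes "planted_phylo V par r0" "w' \<in> children V par r0 v" "w'' \<in> children V par r0 v" "w' \<noteq> w''"
  shows "v \<noteq> r0"
  using assms unfolding planted_phylo_def by (metis card_1_singletonE singletonD)

context rooted_tree
begin

lemma anc_antisym:
  assumes "x \<in> V" "anc par x y" "anc par y x"
  shows "x = y"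
proof (rule ccontr)
  assume "x \<noteq> y"
  obtain i j where i: "(par ^^ i) x = y" and j: "(par ^^ j) y = x"
    using assms unfolding anc_def by blast
  have "i \<noteq> 0" using i \<open>x \<noteq> y\<close> by (metis funpow_0)
  have "((par ^^ (j + i)) ^^ n) x = x" for n
    by (induction n) (simp_all add: funpow_add i j)
  then have periodic: "(par ^^ (n * (j + i))) x = x" for n
    by (simp add: funpow_mult mult.commute)
  obtain n where n: "(par ^^ n) x = r0"
    using anc_root[OF \<open>x \<in> V\<close>] unfolding anc_def by blast
  \<comment> \<open>Going around the cycle through x at least n times reaches the fixed point r0.\<close>
  have "n \<le> n * (j + i)" using \<open>i \<noteq> 0\<close> by simp
  then have "(par ^^ (n * (j + i))) x = (par ^^ (n * (j + i) - n)) ((par ^^ n) x)"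
    by (metis comp_apply funpow_add le_add_diff_inverse2)
  also have "\<dots> = r0" using n funpow_fixpoint[of par r0] par_root by simp
  finally have "x = r0" using periodic by simp
  then show False
    using i \<open>x \<noteq> y\<close> funpow_fixpoint[of par r0] par_root by simp
qed

lemma par_neq_self:
  assumes "v \<in> V" "v \<noteq> r0"
  shows "par v \<noteq> v"
proof
  assume "par v = v"
  obtain k where "(par ^^ k) v = r0" using anc_root[OF \<open>v \<in> V\<close>] unfolding anc_def by blast
  then show False using funpow_fixpoint[of par v, OF \<open>par v = v\<close>] \<open>v \<noteq> r0\<close> by simp
qed

lemma funpow_par_in_V: "v \<in> V \<Longrightarrow> (par ^^ k) v \<in> V"
  by (induction k) (simp_all add: par_in_V)

lemma child_above:
  assumes "x \<in> V" "anc par x w" "x \<noteq> w"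
  shows "\<exists>w'\<in>children V par r0 w. anc par x w'"
proof -
  obtain k where "(par ^^ k) x = w" using assms(2) unfolding anc_def by blast
  then show ?thesis using assms(1,3)
  proof (induction k arbitrary: x)
    case 0
    then show ?case by simp
  next
    case (Suc k)
    show ?case
    proof (cases "par x = w")
      case True
      have "x \<noteq> r0" using True \<open>x \<noteq> w\<close> par_root by auto
      then have "x \<in> children V par r0 w"
        using True \<open>x \<in> V\<close> unfolding children_def by simp
      with anc_refl show ?thesis by (rule bexI)
    next
      case False
      have "(par ^^ k) (par x) = w"
        using Suc.prems(1) by (simp only: funpow_Suc_right comp_apply)
      then obtain w' where "w' \<in> children V par r0 w" "anc par (par x) w'"
        using Suc.IH[of "par x"] False par_in_V[OF \<open>x \<in> V\<close>] by blast
      then show ?thesis using anc_trans[OF anc_par[of par x]] by blast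
    qed
  qed
qed

lemma inner_if_strictly_above:
  "z \<in> V \<Longrightarrow> z \<noteq> r0 \<Longrightarrow> s \<in> V \<Longrightarrow> anc par s z \<Longrightarrow> s \<noteq> z \<Longrightarrow> z \<in> inner V par r0"
  using child_above unfolding inner_def by blast

lemma lca_exists:
  assumes "B \<subseteq> V" "B \<noteq> {}"
  shows "\<exists>l\<in>V. (\<forall>b\<in>B. anc par b l) \<and> (\<forall>y\<in>V. (\<forall>b\<in>B. anc par b y) \<longrightarrow> anc par l y)"
proof -
  obtain b0 where "b0 \<in> B" using assms(2) by blast
  then have "b0 \<in> V" using assms(1) by blast
  obtain n where "(par ^^ n) b0 = r0" using anc_root[OF \<open>b0 \<in> V\<close>] unfolding anc_def by blast
  then have "\<forall>b\<in>B. anc par b ((par ^^ n) b0)" using anc_root assms(1) by auto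
  then have ex: "\<exists>k. \<forall>b\<in>B. anc par b ((par ^^ k) b0)" by blast
  \<comment> \<open>The lca is the first ancestor of b0 that lies above all of B.\<close>
  define k where "k = (LEAST k. \<forall>b\<in>B. anc par b ((par ^^ k) b0))"
  have above: "\<forall>b\<in>B. anc par b ((par ^^ k) b0)"
    unfolding k_def by (rule LeastI_ex[OF ex])
  have least: "anc par ((par ^^ k) b0) y" if y: "\<forall>b\<in>B. anc par b y" for y
  proof -
    obtain j where j: "(par ^^ j) b0 = y" using y \<open>b0 \<in> B\<close> unfolding anc_def by blast
    then have "k \<le> j" unfolding k_def using y by (intro Least_le) simp
    then have "(par ^^ (j - k)) ((par ^^ k) b0) = y"
      using j by (metis comp_apply funpow_add le_add_diff_inverse2)
    then show ?thesis unfolding anc_def by blast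
  qed
  show ?thesis using funpow_par_in_V[OF \<open>b0 \<in> V\<close>] above least by blast
qed

lemma lcaT_eqI:
  assumes "l \<in> V" "\<forall>b\<in>B. anc par b l" "\<forall>y\<in>V. (\<forall>b\<in>B. anc par b y) \<longrightarrow> anc par l y"
  shows "lcaT V par B = l"
  unfolding lcaT_def
proof (rule the_equality)
  fix x
  assume x: "x \<in> V \<and> (\<forall>b\<in>B. anc par b x) \<and> (\<forall>y\<in>V. (\<forall>b\<in>B. anc par b y) \<longrightarrow> anc par x y)"
  then show "x = l" using assms anc_antisym by blast
qed (use assms in blast)

lemma lcaT_least_upper_bound:
  assumes "B \<subseteq> V" "B \<noteq> {}"
  shows "lcaT V par B \<in> V \<and> (\<forall>b\<in>B. anc par b (lcaT V par B)) \<and>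
    (\<forall>y\<in>V. (\<forall>b\<in>B. anc par b y) \<longrightarrow> anc par (lcaT V par B) y)"
  using lca_exists[OF assms] lcaT_eqI by metis

lemma lcaT_in_V: "B \<subseteq> V \<Longrightarrow> B \<noteq> {} \<Longrightarrow> lcaT V par B \<in> V"
  using lcaT_least_upper_bound by blast

lemma anc_lcaT: "B \<subseteq> V \<Longrightarrow> b \<in> B \<Longrightarrow> anc par b (lcaT V par B)"
  using lcaT_least_upper_bound by blast

lemma lcaT_anc:
  "B \<subseteq> V \<Longrightarrow> B \<noteq> {} \<Longrightarrow> y \<in> V \<Longrightarrow> \<forall>b\<in>B. anc par b y \<Longrightarrow> anc par (lcaT V par B) y"
  using lcaT_least_upper_bound by blast

lemma lcaT_not_below_lcaT:
  assumes A: "A \<subseteq> V" "A \<noteq> {}" and B: "B \<subseteq> V" "B \<noteq> {}"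
    and ne: "lcaT V par B \<noteq> lcaT V par (A \<union> B)"
  shows "\<not> anc par (lcaT V par A) (lcaT V par B)"
proof
  assume below: "anc par (lcaT V par A) (lcaT V par B)"
  have "anc par s (lcaT V par B)" if "s \<in> A \<union> B" for s
  proof (cases "s \<in> A")
    case True
    then show ?thesis using anc_trans[OF anc_lcaT[OF A(1)] below] by blast
  next
    case False
    then show ?thesis using that anc_lcaT[OF B(1)] by blast
  qed
  then have "anc par (lcaT V par (A \<union> B)) (lcaT V par B)"
    using A B by (intro lcaT_anc lcaT_in_V) auto
  moreover have "anc par (lcaT V par B) (lcaT V par (A \<union> B))"
    using A B by (intro lcaT_anc lcaT_in_V) (auto intro: anc_lcaT)
  ultimately show False
    using anc_antisym[OF lcaT_in_V[OF B]] ne by blast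
qed

lemma lcaT_cross_pair:
  assumes A: "A \<subseteq> V" "A \<noteq> {}" and B: "B \<subseteq> V" "B \<noteq> {}"
    and "lcaT V par A \<noteq> lcaT V par (A \<union> B)" "lcaT V par B \<noteq> lcaT V par (A \<union> B)"
    and "s \<in> A" "t \<in> B"
  shows "lcaT V par {s, t} = lcaT V par (A \<union> B)"
proof -
  define z where "z = lcaT V par {s, t}"
  have st: "{s, t} \<subseteq> V" using assms by blast
  have z: "z \<in> V" "anc par s z" "anc par t z"
    unfolding z_def using st by (auto intro: lcaT_in_V anc_lcaT)
  have "\<not> anc par (lcaT V par A) (lcaT V par B)" "\<not> anc par (lcaT V par B) (lcaT V par A)"
    using lcaT_not_below_lcaT[OF A B] lcaT_not_below_lcaT[OF B A] assms(5,6)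
    by (auto simp: Un_commute)
  then have "anc par (lcaT V par A) z" "anc par (lcaT V par B) z"
    using anc_upper_of_incomparable[OF anc_lcaT[OF A(1) \<open>s \<in> A\<close>] anc_lcaT[OF B(1) \<open>t \<in> B\<close>] z(2,3)]
      anc_upper_of_incomparable[OF anc_lcaT[OF B(1) \<open>t \<in> B\<close>] anc_lcaT[OF A(1) \<open>s \<in> A\<close>] z(3,2)]
    by blast+
  then have "\<forall>x\<in>A \<union> B. anc par x z"
    using anc_trans[OF anc_lcaT[OF A(1)]] anc_trans[OF anc_lcaT[OF B(1)]] by blast
  then have "anc par (lcaT V par (A \<union> B)) z"
    using A B z by (intro lcaT_anc) auto
  moreover have "anc par z (lcaT V par (A \<union> B))"
    unfolding z_def using A B assms(7,8) by (intro lcaT_anc) (auto intro: lcaT_in_V anc_lcaT)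
  ultimately have "z = lcaT V par (A \<union> B)" using anc_antisym[OF z(1)] by blast
  then show ?thesis unfolding z_def .
qed

lemma lcaT_children_split:
  assumes B: "B \<subseteq> leaves V par r0" and "x \<in> V"
    and "p \<in> B" "anc par p x" and "t0 \<in> B" "\<not> anc par t0 x"
  obtains w' w'' t where "w' \<in> children V par r0 (lcaT V par B)"
    "w'' \<in> children V par r0 (lcaT V par B)" "w' \<noteq> w''"
    "anc par x w'" "t \<in> B" "anc par t w''"
proof -
  define l where "l = lcaT V par B"
  have BV: "B \<subseteq> V" using B unfolding leaves_def by blast
  have "B \<noteq> {}" using \<open>p \<in> B\<close> by blast
  have l: "l \<in> V" "\<forall>b\<in>B. anc par b l"
    unfolding l_def using BV \<open>B \<noteq> {}\<close> by (auto intro: lcaT_in_V anc_lcaT)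
  have "\<not> anc par l x"
    using anc_trans[of par t0 l x] l(2) \<open>t0 \<in> B\<close> \<open>\<not> anc par t0 x\<close> by blast
  then have "anc par x l" "x \<noteq> l"
    using anc_linear[OF \<open>anc par p x\<close>] l(2) \<open>p \<in> B\<close> by auto
  then obtain w' where w': "w' \<in> children V par r0 l" "anc par x w'"
    using child_above[OF \<open>x \<in> V\<close>] by blast
  then have "w' \<in> V" "par w' = l" "w' \<noteq> r0" unfolding children_def by auto
  then have "\<not> anc par l w'"
    using anc_antisym[OF \<open>w' \<in> V\<close> anc_par[of par w']] par_neq_self[OF \<open>w' \<in> V\<close> \<open>w' \<noteq> r0\<close>]
    by auto
  then obtain t where "t \<in> B" "\<not> anc par t w'"
    using lcaT_anc[OF BV \<open>B \<noteq> {}\<close> \<open>w' \<in> V\<close>] unfolding l_def by blast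
  \<comment> \<open>t is a leaf while l has the child w', so t lies strictly below l.\<close>
  have "t \<noteq> l" using \<open>t \<in> B\<close> B w'(1) unfolding leaves_def by auto
  then obtain w'' where "w'' \<in> children V par r0 l" "anc par t w''"
    using child_above[of t l] BV \<open>t \<in> B\<close> l(2) by blast
  moreover have "w' \<noteq> w''" using \<open>anc par t w''\<close> \<open>\<not> anc par t w'\<close> by blast
  ultimately show ?thesis using that w' \<open>t \<in> B\<close> unfolding l_def by blast
qed

end

lemma ple_Vx_Vx [simp]: "ple par (Vx x) (Vx y) \<longleftrightarrow> anc par x y"
  unfolding ple_def by auto

lemma ple_Vx_Ed [simp]: "ple par (Vx x) (Ed p q) \<longleftrightarrow> anc par x q"
  unfolding ple_def by auto

lemma ple_Vx_anc_trans: "anc par s u \<Longrightarrow> ple par (Vx u) P \<Longrightarrow> ple par (Vx s) P"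
  by (cases P) (auto intro: anc_trans)

lemma lcaS_Vx_image: "lcaS V par (Vx ` B) = lcaT V par B"
  unfolding lcaS_def lcaT_def by simp

lemma places_above_vertex_linear:
  assumes "P \<in> Vx ` V \<union> edges V par r0" "Q \<in> Vx ` V \<union> edges V par r0"
    and "ple par (Vx y) P" "ple par (Vx y) Q"
  shows "ple par P Q \<or> ple par Q P"
proof -
  have "(\<exists>p. R = Vx p) \<or> (\<exists>q. R = Ed (par q) q)" if "R \<in> Vx ` V \<union> edges V par r0" for R
    using that unfolding edges_def by auto
  then consider p p' where "P = Vx p" "Q = Vx p'" | p q' where "P = Vx p" "Q = Ed (par q') q'"
    | q p' where "P = Ed (par q) q" "Q = Vx p'" | q q' where "P = Ed (par q) q" "Q = Ed (par q') q'"
    using assms(1,2) by metis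
  then show ?thesis
  proof cases
    case (1 p p')
    then show ?thesis using assms(3,4) anc_linear[of par y p p'] by auto
  next
    case (2 p q')
    then show ?thesis using assms(3,4) anc_linear[of par y p q'] anc_par_if_neq[of par q' p]
      by (cases "p = q'") (auto simp: ple_def)
  next
    case (3 q p')
    then show ?thesis using assms(3,4) anc_linear[of par y p' q] anc_par_if_neq[of par q p']
      by (cases "p' = q") (auto simp: ple_def)
  next
    case (4 q q')
    then show ?thesis
      using assms(3,4) anc_linear[of par y q q'] anc_par_if_neq[of par q' q] anc_par_if_neq[of par q q']
      by (cases "q = q'") (auto simp: ple_def)
  qed
qed

lemma (in rooted_tree) lcaT_ple:
  assumes "B \<subseteq> V" "B \<noteq> {}" "P \<in> Vx ` V \<union> edges V par r0" "\<forall>s\<in>B. ple par (Vx s) P"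
  shows "ple par (Vx (lcaT V par B)) P"
  using assms unfolding edges_def by (auto intro: lcaT_anc)

lemma cross_quartet_cluster:
  assumes "quartet V par r0 a c b d \<or> quartet V par r0 a d b c"
  obtains x p q t where "x \<in> V" "p \<in> {a, b}" "q \<in> {c, d}" "t \<in> {a, b, c, d}"
    "anc par p x" "anc par q x" "\<not> anc par t x"
  using assms that unfolding quartet_def by blast

context
  fixes VT :: "'v set" and parT :: "'v \<Rightarrow> 'v" and r0T :: 'v and \<sigma> :: "'v \<Rightarrow> 'w"
    and VS :: "'w set" and parS :: "'w \<Rightarrow> 'w" and r0S :: 'w and \<mu> :: "'v \<Rightarrow> 'w place"
  assumes \<mu>: "reconciliation VT parT r0T \<sigma> VS parS r0S \<mu>"
begin

lemma reconciliation_place: "v \<in> VT \<Longrightarrow> \<mu> v \<in> Vx ` VS \<union> edges VS parS r0S"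
  using \<mu> unfolding reconciliation_def by (elim conjE) (erule bspec)

lemma reconciliation_root_iff: "v \<in> VT \<Longrightarrow> \<mu> v = Vx r0S \<longleftrightarrow> v = r0T"
  using \<mu> unfolding reconciliation_def by (elim conjE) (erule bspec)

lemma reconciliation_leaf: "v \<in> leaves VT parT r0T \<Longrightarrow> \<mu> v = Vx (\<sigma> v)"
  using \<mu> unfolding reconciliation_def by (elim conjE) (erule bspec)

lemma reconciliation_mono:
  "v \<in> VT \<Longrightarrow> w \<in> VT \<Longrightarrow> anc parT v w \<Longrightarrow> v \<noteq> w \<Longrightarrow> ple parS (\<mu> v) (\<mu> w)"
  using \<mu> unfolding reconciliation_def by (elim conjE) blast

lemma reconciliation_children_incomparable:
  assumes "v \<in> VT" "\<mu> v \<in> Vx ` inner VS parS r0S"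
    and "v' \<in> children VT parT r0T v" "v'' \<in> children VT parT r0T v" "v' \<noteq> v''"
  shows "\<not> ple parS (\<mu> v') (\<mu> v'')"
  using \<mu> assms unfolding reconciliation_def by (elim conjE) blast

lemma reconciliation_leaf_below:
  assumes "y \<in> leaves VT parT r0T" "w \<in> VT" "anc parT y w"
  shows "ple parS (Vx (\<sigma> y)) (\<mu> w)"
proof (cases "y = w")
  case True
  then show ?thesis using reconciliation_leaf assms(1) by (simp add: ple_def)
next
  case False
  have "y \<in> VT" using assms(1) unfolding leaves_def by blast
  then show ?thesis
    using reconciliation_mono[OF _ assms(2,3) False] reconciliation_leaf[OF assms(1)] by simp
qed

lemma reconciliation_lcaT_below:
  assumes S: "rooted_tree VS parS r0S"
    and B: "B \<subseteq> leaves VT parT r0T" "B \<noteq> {}" "\<sigma> ` B \<subseteq> VS"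
    and "w \<in> VT" "\<forall>y\<in>B. anc parT y w"
  shows "ple parS (Vx (lcaT VS parS (\<sigma> ` B))) (\<mu> w)"
proof (rule rooted_tree.lcaT_ple[OF S B(3)])
  show "\<sigma> ` B \<noteq> {}" using B(2) by blast
  show "\<mu> w \<in> Vx ` VS \<union> edges VS parS r0S" by (rule reconciliation_place[OF \<open>w \<in> VT\<close>])
  show "\<forall>s\<in>\<sigma> ` B. ple parS (Vx s) (\<mu> w)"
    using reconciliation_leaf_below[OF _ \<open>w \<in> VT\<close>] B(1) assms(6) by blast
qed

lemma reconciliation_duplication:
  assumes T: "planted_phylo VT parT r0T" and S: "rooted_tree VS parS r0S"
    and "w \<in> VT" "w' \<in> children VT parT r0T w" "w'' \<in> children VT parT r0T w" "w' \<noteq> w''"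
    and "ple parS (\<mu> w') (\<mu> w'') \<or> ple parS (\<mu> w'') (\<mu> w')"
    and "s \<in> VS" "anc parS s u" "s \<noteq> u" "ple parS (Vx u) (\<mu> w)"
  shows "plt parS (Vx u) (\<mu> w) \<and> \<mu> w \<in> edges VS parS r0S"
proof -
  interpret S: rooted_tree VS parS r0S by (rule S)
  have "w \<noteq> r0T" using planted_phylo_not_root_if_two_children[OF T assms(4-6)] .
  have not_inner: "\<mu> w \<notin> Vx ` inner VS parS r0S"
    using reconciliation_children_incomparable[OF \<open>w \<in> VT\<close> _ assms(4,5)]
      reconciliation_children_incomparable[OF \<open>w \<in> VT\<close> _ assms(5,4)] assms(6,7) by metis
  have "\<mu> w \<in> edges VS parS r0S"
  proof (rule ccontr)
    assume "\<mu> w \<notin> edges VS parS r0S"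
    then obtain z where z: "\<mu> w = Vx z" "z \<in> VS"
      using reconciliation_place[OF \<open>w \<in> VT\<close>] by blast
    have "z \<noteq> r0S" using reconciliation_root_iff[OF \<open>w \<in> VT\<close>] \<open>w \<noteq> r0T\<close> z(1) by simp
    have "anc parS u z" using assms(11) z(1) by simp
    then have "anc parS s z" "s \<noteq> z"
      using anc_trans[OF assms(9)] S.anc_antisym[OF \<open>s \<in> VS\<close> assms(9)] assms(10) by auto
    then have "z \<in> inner VS parS r0S"
      using S.inner_if_strictly_above[OF z(2) \<open>z \<noteq> r0S\<close> \<open>s \<in> VS\<close>] by blast
    then show False using not_inner z(1) by simp
  qed
  moreover have "plt parS (Vx u) (\<mu> w)"
    using assms(11) calculation unfolding edges_def ple_def by auto
  ultimately show ?thesis by simp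
qed

lemma lcaT_duplication_of_spanning_cluster:
  assumes T: "planted_phylo VT parT r0T" and S: "rooted_tree VS parS r0S"
    and B: "B \<subseteq> leaves VT parT r0T" "\<sigma> ` B \<subseteq> VS"
    and x: "x \<in> VT" "p \<in> B" "q \<in> B" "anc parT p x" "anc parT q x" "t0 \<in> B" "\<not> anc parT t0 x"
    and spans: "lcaT VS parS {\<sigma> p, \<sigma> q} = lcaT VS parS (\<sigma> ` B)"
    and s: "s \<in> VS" "anc parS s (lcaT VS parS (\<sigma> ` B))" "s \<noteq> lcaT VS parS (\<sigma> ` B)"
  shows "plt parS (Vx (lcaT VS parS (\<sigma> ` B))) (\<mu> (lcaT VT parT B))
    \<and> \<mu> (lcaT VT parT B) \<in> edges VS parS r0S"
proof -
  interpret T: rooted_tree VT parT r0T using T by (rule planted_phylo_rooted_tree)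
  interpret S: rooted_tree VS parS r0S by (rule S)
  define u where "u = lcaT VS parS (\<sigma> ` B)"
  define w where "w = lcaT VT parT B"
  have "B \<subseteq> VT" "B \<noteq> {}" using B(1) x(2) unfolding leaves_def by auto
  then have "w \<in> VT" "\<forall>y\<in>B. anc parT y w"
    unfolding w_def by (auto intro: T.lcaT_in_V T.anc_lcaT)
  obtain w' w'' t where w: "w' \<in> children VT parT r0T w" "w'' \<in> children VT parT r0T w"
      "w' \<noteq> w''" "anc parT x w'" "t \<in> B" "anc parT t w''"
    using T.lcaT_children_split[OF B(1) x(1,2,4,6,7)] unfolding w_def by blast
  have "w' \<in> VT" "w'' \<in> VT" using w(1,2) unfolding children_def by auto
  have pq: "{p, q} \<subseteq> leaves VT parT r0T" "\<sigma> ` {p, q} \<subseteq> VS" "\<forall>y\<in>{p, q}. anc parT y w'"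
    using B x(2-5) anc_trans[OF _ w(4)] by auto
  have "ple parS (Vx (lcaT VS parS (\<sigma> ` {p, q}))) (\<mu> w')"
    by (rule reconciliation_lcaT_below[OF S pq(1) _ pq(2) \<open>w' \<in> VT\<close> pq(3)]) simp
  then have "ple parS (Vx u) (\<mu> w')"
    using spans unfolding u_def by simp
  then have "ple parS (Vx (\<sigma> t)) (\<mu> w')"
    using ple_Vx_anc_trans[OF S.anc_lcaT[OF B(2)]] w(5) unfolding u_def by blast
  moreover have "ple parS (Vx (\<sigma> t)) (\<mu> w'')"
    using reconciliation_leaf_below[OF _ \<open>w'' \<in> VT\<close> w(6)] w(5) B(1) by blast
  ultimately have "ple parS (\<mu> w') (\<mu> w'') \<or> ple parS (\<mu> w'') (\<mu> w')"
    by (rule places_above_vertex_linear[OF reconciliation_place[OF \<open>w' \<in> VT\<close>]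
          reconciliation_place[OF \<open>w'' \<in> VT\<close>]])
  moreover have "ple parS (Vx u) (\<mu> w)"
    unfolding u_def using reconciliation_lcaT_below[OF S B(1) \<open>B \<noteq> {}\<close> B(2) \<open>w \<in> VT\<close>]
      \<open>\<forall>y\<in>B. anc parT y w\<close> by blast
  ultimately show ?thesis
    using reconciliation_duplication[OF T S \<open>w \<in> VT\<close> w(1-3) _ s[folded u_def]]
    unfolding u_def w_def by blast
qed

end

theorem theorem2:
  fixes VT :: "'v set" and parT :: "'v \<Rightarrow> 'v" and r0T :: 'v and \<sigma> :: "'v \<Rightarrow> 'w"
    and VS :: "'w set" and parS :: "'w \<Rightarrow> 'w" and r0S :: 'w
    and \<mu> :: "'v \<Rightarrow> 'w place" and a b c d :: 'v
  assumes T: "planted_phylo VT parT r0T"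
    and S: "planted_phylo VS parS r0S"
    and \<sigma>: "\<sigma> ` leaves VT parT r0T \<subseteq> leaves VS parS r0S"
    and leaves: "a \<in> leaves VT parT r0T" "b \<in> leaves VT parT r0T"
                "c \<in> leaves VT parT r0T" "d \<in> leaves VT parT r0T"
    and distinct: "distinct [\<sigma> a, \<sigma> b, \<sigma> c, \<sigma> d]"
    and v1: "anc parS (lcaS VS parS {Vx (\<sigma> a), Vx (\<sigma> b)})
                 (lcaS VS parS {Vx (\<sigma> a), Vx (\<sigma> b), Vx (\<sigma> c), Vx (\<sigma> d)})"
            "lcaS VS parS {Vx (\<sigma> a), Vx (\<sigma> b)}
               \<noteq> lcaS VS parS {Vx (\<sigma> a), Vx (\<sigma> b), Vx (\<sigma> c), Vx (\<sigma> d)}"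
    and v2: "anc parS (lcaS VS parS {Vx (\<sigma> c), Vx (\<sigma> d)})
                 (lcaS VS parS {Vx (\<sigma> a), Vx (\<sigma> b), Vx (\<sigma> c), Vx (\<sigma> d)})"
            "lcaS VS parS {Vx (\<sigma> c), Vx (\<sigma> d)}
               \<noteq> lcaS VS parS {Vx (\<sigma> a), Vx (\<sigma> b), Vx (\<sigma> c), Vx (\<sigma> d)}"
    and Q: "quartet VT parT r0T a c b d \<or> quartet VT parT r0T a d b c"
    and \<mu>: "reconciliation VT parT r0T \<sigma> VS parS r0S \<mu>"
  shows "plt parS (Vx (lcaS VS parS {Vx (\<sigma> a), Vx (\<sigma> b), Vx (\<sigma> c), Vx (\<sigma> d)}))
                  (\<mu> (lcaT VT parT {a, b, c, d}))
         \<and> \<mu> (lcaT VT parT {a, b, c, d}) \<in> edges VS parS r0S"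
proof -
  interpret S: rooted_tree VS parS r0S using S by (rule planted_phylo_rooted_tree)
  let ?L = "{a, b, c, d}"
  have L: "?L \<subseteq> leaves VT parT r0T" "\<sigma> ` ?L \<subseteq> VS"
    using leaves \<sigma> unfolding leaves_def by auto
  have lcaS_abcd: "lcaS VS parS {Vx (\<sigma> a), Vx (\<sigma> b), Vx (\<sigma> c), Vx (\<sigma> d)} = lcaT VS parS (\<sigma> ` ?L)"
    and lcaS_ab: "lcaS VS parS {Vx (\<sigma> a), Vx (\<sigma> b)} = lcaT VS parS {\<sigma> a, \<sigma> b}"
    and lcaS_cd: "lcaS VS parS {Vx (\<sigma> c), Vx (\<sigma> d)} = lcaT VS parS {\<sigma> c, \<sigma> d}"
    using lcaS_Vx_image[of VS parS "\<sigma> ` ?L"] lcaS_Vx_image[of VS parS "{\<sigma> a, \<sigma> b}"]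
      lcaS_Vx_image[of VS parS "{\<sigma> c, \<sigma> d}"] by simp_all
  obtain x p q t0 where x: "x \<in> VT" "p \<in> {a, b}" "q \<in> {c, d}" "t0 \<in> ?L"
      "anc parT p x" "anc parT q x" "\<not> anc parT t0 x"
    by (rule cross_quartet_cluster[OF Q])
  have "{\<sigma> a, \<sigma> b} \<union> {\<sigma> c, \<sigma> d} = \<sigma> ` ?L" by auto
  then have "lcaT VS parS {\<sigma> p, \<sigma> q} = lcaT VS parS (\<sigma> ` ?L)"
    using S.lcaT_cross_pair[of "{\<sigma> a, \<sigma> b}" "{\<sigma> c, \<sigma> d}" "\<sigma> p" "\<sigma> q"] L(2) x(2,3)
      v1(2) v2(2) unfolding lcaS_abcd lcaS_ab lcaS_cd by auto
  moreover have "lcaT VS parS {\<sigma> a, \<sigma> b} \<in> VS"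
    using L(2) by (intro S.lcaT_in_V) auto
  ultimately show ?thesis
    using lcaT_duplication_of_spanning_cluster[OF \<mu> T S.rooted_tree_axioms L x(1) _ _ x(5,6,4,7)]
      x(2,3) v1 unfolding lcaS_abcd lcaS_ab by blast
qed

end
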